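(* Let $G$ be a connected graph with $n$ vertices and let $k$ be an integer. The following statements are equivalent: (1) there is a GS ordering of $G$ whose $\mathcal{F}$-tree has at least $k$ leaves; (2) there is a spanning tree of $G$ with at least $k$ leaves; (3) there is a connected dominating set of $G$ with at most $n-k$ vertices.
   Context: All graphs are finite, simple, undirected, connected and non-empty. A GS ordering of $G$ is an ordering $(v_1,\dots,v_n)$ of $V(G)$ such that every $v_i$ with $i>1$ has a neighbor among $v_1,\dots,v_{i-1}$. Its $\mathcal{F}$-tree is the spanning tree rooted at $v_1$ in which the parent of $v_i$ ($i>1$) is its leftmost neighbor in the ordering. Spanning trees are rooted; a leaf is a non-root vertex without children (the root is never a leaf). A connected dominating set is a set $D\subseteq V(G)$ with $G[D]$ connected and every vertex outside $D$ adjacent to a vertex of $D$. *)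

theory Defs
  imports Main
begin

definition simple_graph :: "'a set \<Rightarrow> 'a set set \<Rightarrow> bool" where
  "simple_graph V E \<longleftrightarrow> finite V \<and> (\<forall>e\<in>E. \<exists>x y. x \<noteq> y \<and> x \<in> V \<and> y \<in> V \<and> e = {x, y})"

definition adj_rel :: "'a set set \<Rightarrow> ('a \<times> 'a) set" where
  "adj_rel E = {(x, y). {x, y} \<in> E}"

definition connected_graph :: "'a set \<Rightarrow> 'a set set \<Rightarrow> bool" where
  "connected_graph V E \<longleftrightarrow> V \<noteq> {} \<and> (\<forall>u\<in>V. \<forall>v\<in>V. (u, v) \<in> (adj_rel E)\<^sup>*)"

definition has_cycle :: "'a set set \<Rightarrow> bool" where
  "has_cycle E \<longleftrightarrow> (\<exists>cs. length cs \<ge> 3 \<and> distinct cs \<and>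
      (\<forall>i < length cs - 1. {cs ! i, cs ! Suc i} \<in> E) \<and> {last cs, hd cs} \<in> E)"

definition spanning_tree :: "'a set \<Rightarrow> 'a set set \<Rightarrow> 'a set set \<Rightarrow> bool" where
  "spanning_tree V E T \<longleftrightarrow> T \<subseteq> E \<and> connected_graph V T \<and> \<not> has_cycle T"

definition tree_degree :: "'a set set \<Rightarrow> 'a \<Rightarrow> nat" where
  "tree_degree T v = card {w. {v, w} \<in> T}"

(* Leaves of a tree T rooted at r: non-root vertices without children.
   In a tree, a non-root vertex has no children iff it has exactly one neighbour (its parent). *)
definition rooted_tree_leaves :: "'a set \<Rightarrow> 'a set set \<Rightarrow> 'a \<Rightarrow> 'a set" where
  "rooted_tree_leaves V T r = {v \<in> V. v \<noteq> r \<and> tree_degree T v = 1}"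

definition gs_ordering :: "'a set \<Rightarrow> 'a set set \<Rightarrow> 'a list \<Rightarrow> bool" where
  "gs_ordering V E vs \<longleftrightarrow> distinct vs \<and> set vs = V \<and>
     (\<forall>i < length vs. 0 < i \<longrightarrow> (\<exists>j < i. {vs ! j, vs ! i} \<in> E))"

definition ftree_parent_idx :: "'a set set \<Rightarrow> 'a list \<Rightarrow> nat \<Rightarrow> nat" where
  "ftree_parent_idx E vs i = (LEAST j. {vs ! j, vs ! i} \<in> E)"

definition ftree_leaves :: "'a set set \<Rightarrow> 'a list \<Rightarrow> 'a set" where
  "ftree_leaves E vs = {vs ! i | i. 0 < i \<and> i < length vs \<and>
      \<not> (\<exists>j < length vs. 0 < j \<and> ftree_parent_idx E vs j = i)}"

definition connected_dominating_set :: "'a set \<Rightarrow> 'a set set \<Rightarrow> 'a set \<Rightarrow> bool" where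
  "connected_dominating_set V E D \<longleftrightarrow> D \<subseteq> V \<and>
     connected_graph D {e \<in> E. e \<subseteq> D} \<and>
     (\<forall>v \<in> V - D. \<exists>d \<in> D. {v, d} \<in> E)"

end

(*
  (1) implies (2): the F-tree of a GS ordering is a spanning tree, acyclic because every vertex
  is joined by F-tree edges to at most one earlier vertex, namely its parent; its F-leaves are
  leaves of the rooted tree.
  (2) implies (3): the non-leaves of a spanning tree form a connected dominating set, since a walk
  between non-leaves never needs to visit a leaf.
  (3) implies (1): a GS ordering of the connected dominating set D followed by the remaining
  vertices is a GS ordering of G in which every vertex outside D has its parent in D, so the
  n - |D| vertices outside D are all leaves of the F-tree.
*)
theory Submission
  imports Defs
begin

lemma sym_adj_rel: "sym (adj_rel E)"
  by (auto simp: adj_rel_def sym_def insert_commute)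

lemma Image_adj_rel: "adj_rel E `` {v} = {w. {v, w} \<in> E}"
  by (auto simp: adj_rel_def)

lemma simple_graph_edgeD:
  assumes "simple_graph V E" "{a, b} \<in> E"
  shows "a \<in> V" "b \<in> V"
  using assms unfolding simple_graph_def by (auto simp: doubleton_eq_iff)

lemma has_cycle_two_neighbours:
  assumes "has_cycle T"
  obtains C where "finite C" "C \<noteq> {}"
    "\<forall>x\<in>C. \<exists>y\<in>C. \<exists>z\<in>C. y \<noteq> z \<and> y \<noteq> x \<and> z \<noteq> x \<and> {x, y} \<in> T \<and> {x, z} \<in> T"
proof -
  obtain cs where L3: "length cs \<ge> 3" and dist: "distinct cs"
    and path: "\<forall>i < length cs - 1. {cs ! i, cs ! Suc i} \<in> T" and closing: "{last cs, hd cs} \<in> T"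
    using assms unfolding has_cycle_def by blast
  define L where "L = length cs"
  define succ where "succ t = (if Suc t < L then Suc t else 0)" for t
  define pred where "pred t = (if t = 0 then L - 1 else t - 1)" for t
  have cs_ne: "cs \<noteq> []" using L3 by auto
  have succ_edge: "{cs ! t, cs ! succ t} \<in> T" if "t < L" for t
  proof (cases "Suc t < L")
    case True
    then show ?thesis using path by (simp add: succ_def L_def)
  next
    case False
    then have "t = L - 1" using that by simp
    then show ?thesis using closing cs_ne False
      by (simp add: succ_def L_def last_conv_nth hd_conv_nth)
  qed
  have pred_edge: "{cs ! t, cs ! pred t} \<in> T" if "t < L" for t
  proof -
    have "succ (pred t) = t" "pred t < L" using that L3 by (auto simp: succ_def pred_def L_def)
    then show ?thesis using succ_edge[of "pred t"] by (simp add: insert_commute)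
  qed
  show ?thesis
  proof
    show "finite (set cs)" "set cs \<noteq> {}" using cs_ne by auto
  next
    show "\<forall>x\<in>set cs. \<exists>y\<in>set cs. \<exists>z\<in>set cs. y \<noteq> z \<and> y \<noteq> x \<and> z \<noteq> x \<and> {x, y} \<in> T \<and> {x, z} \<in> T"
    proof
      fix x assume "x \<in> set cs"
      then obtain t where t: "t < L" "x = cs ! t" by (auto simp: L_def in_set_conv_nth)
      have "succ t < L" "pred t < L" "succ t \<noteq> pred t" "succ t \<noteq> t" "pred t \<noteq> t"
        using t(1) L3 by (auto simp: succ_def pred_def L_def)
      then have "cs ! succ t \<noteq> cs ! pred t" "cs ! succ t \<noteq> x" "cs ! pred t \<noteq> x"
        using t dist by (auto simp: L_def nth_eq_iff_index_eq)
      moreover have "cs ! succ t \<in> set cs" "cs ! pred t \<in> set cs"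
        using \<open>succ t < L\<close> \<open>pred t < L\<close> by (auto simp: L_def)
      ultimately show "\<exists>y\<in>set cs. \<exists>z\<in>set cs. y \<noteq> z \<and> y \<noteq> x \<and> z \<noteq> x \<and> {x, y} \<in> T \<and> {x, z} \<in> T"
        using succ_edge pred_edge t by blast
    qed
  qed
qed

text \<open>A cycle has a vertex of maximal rank, and both of its cycle neighbours have lower rank.\<close>
lemma not_has_cycle_if_unique_lower_neighbour:
  fixes rank :: "'a \<Rightarrow> 'b::linorder"
  assumes inj: "inj_on rank (\<Union>T)"
    and unique: "\<And>x y z. {x, y} \<in> T \<Longrightarrow> {x, z} \<in> T \<Longrightarrow> rank y < rank x \<Longrightarrow> rank z < rank x \<Longrightarrow> y = z"
  shows "\<not> has_cycle T"
proof
  assume "has_cycle T"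
  then obtain C where fin: "finite C" and ne: "C \<noteq> {}"
    and nbrs: "\<forall>x\<in>C. \<exists>y\<in>C. \<exists>z\<in>C. y \<noteq> z \<and> y \<noteq> x \<and> z \<noteq> x \<and> {x, y} \<in> T \<and> {x, z} \<in> T"
    by (rule has_cycle_two_neighbours)
  have "Max (rank ` C) \<in> rank ` C" using fin ne by simp
  then obtain x where x: "x \<in> C" "rank x = Max (rank ` C)" by (metis imageE)
  then obtain y z where yz: "y \<in> C" "z \<in> C" "y \<noteq> z" "y \<noteq> x" "z \<noteq> x" "{x, y} \<in> T" "{x, z} \<in> T"
    using nbrs by blast
  have lower: "rank w < rank x" if "w \<in> C" "w \<noteq> x" "{x, w} \<in> T" for w
  proof -
    have "rank w \<noteq> rank x" using inj that by (metis UnionI insertCI inj_on_contraD)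
    moreover have "rank w \<le> rank x" using x fin that by simp
    ultimately show ?thesis by simp
  qed
  show False using unique[OF yz(6,7) lower lower] yz by blast
qed

lemma gs_ordering_parent:
  assumes "gs_ordering V E vs" "0 < i" "i < length vs"
  shows "ftree_parent_idx E vs i < i" "{vs ! ftree_parent_idx E vs i, vs ! i} \<in> E"
proof -
  obtain j where j: "j < i" "{vs ! j, vs ! i} \<in> E"
    using assms unfolding gs_ordering_def by blast
  show "{vs ! ftree_parent_idx E vs i, vs ! i} \<in> E"
    unfolding ftree_parent_idx_def by (rule LeastI[of "\<lambda>j. {vs ! j, vs ! i} \<in> E", OF j(2)])
  have "ftree_parent_idx E vs i \<le> j"
    unfolding ftree_parent_idx_def by (rule Least_le[of "\<lambda>j. {vs ! j, vs ! i} \<in> E", OF j(2)])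
  with j(1) show "ftree_parent_idx E vs i < i" by simp
qed

definition ftree :: "'a set set \<Rightarrow> 'a list \<Rightarrow> 'a set set" where
  "ftree E vs = {{vs ! i, vs ! ftree_parent_idx E vs i} | i. 0 < i \<and> i < length vs}"

lemma ftree_subset:
  assumes "gs_ordering V E vs"
  shows "ftree E vs \<subseteq> E"
proof
  fix e assume "e \<in> ftree E vs"
  then obtain i where "0 < i" "i < length vs" "e = {vs ! ftree_parent_idx E vs i, vs ! i}"
    unfolding ftree_def by (auto simp: insert_commute)
  then show "e \<in> E" using gs_ordering_parent(2)[OF assms] by simp
qed

lemma Union_ftree_subset:
  assumes "gs_ordering V E vs"
  shows "\<Union>(ftree E vs) \<subseteq> set vs"
proof
  fix x assume "x \<in> \<Union>(ftree E vs)"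
  then obtain i where "0 < i" "i < length vs" "x = vs ! i \<or> x = vs ! ftree_parent_idx E vs i"
    unfolding ftree_def by blast
  moreover have "ftree_parent_idx E vs i < length vs" if "0 < i" "i < length vs" for i
    using gs_ordering_parent(1)[OF assms that] that by simp
  ultimately show "x \<in> set vs" by auto
qed

lemma ftree_edge_iff:
  assumes gs: "gs_ordering V E vs" and "i < length vs" "j < length vs"
  shows "{vs ! i, vs ! j} \<in> ftree E vs \<longleftrightarrow>
    (0 < i \<and> j = ftree_parent_idx E vs i) \<or> (0 < j \<and> i = ftree_parent_idx E vs j)"
proof -
  have "distinct vs" using gs by (simp add: gs_ordering_def)
  moreover have "ftree_parent_idx E vs l < length vs" if "0 < l" "l < length vs" for l
    using gs_ordering_parent(1)[OF gs that] that by simp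
  ultimately show ?thesis
    using assms(2,3) unfolding ftree_def by (auto simp: doubleton_eq_iff nth_eq_iff_index_eq)
qed

lemma connected_ftree:
  assumes gs: "gs_ordering V E vs" and "V \<noteq> {}"
  shows "connected_graph V (ftree E vs)"
proof -
  let ?R = "adj_rel (ftree E vs)"
  have from_root: "(vs ! 0, vs ! i) \<in> ?R\<^sup>*" if "i < length vs" for i
    using that
  proof (induction i rule: less_induct)
    case (less i)
    show ?case
    proof (cases "i = 0")
      case False
      let ?p = "ftree_parent_idx E vs i"
      have "?p < i" using gs_ordering_parent(1)[OF gs _ less.prems] False by simp
      then have "(vs ! 0, vs ! ?p) \<in> ?R\<^sup>*" using less by simp
      moreover have "(vs ! ?p, vs ! i) \<in> ?R"
        using False less.prems unfolding adj_rel_def ftree_def by (auto simp: insert_commute)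
      ultimately show ?thesis by (rule rtrancl_into_rtrancl)
    qed simp
  qed
  have "(u, v) \<in> ?R\<^sup>*" if uv: "u \<in> V" "v \<in> V" for u v
  proof -
    have "set vs = V" using gs by (simp add: gs_ordering_def)
    then obtain a b where ab: "a < length vs" "b < length vs" "u = vs ! a" "v = vs ! b"
      using uv by (auto simp: in_set_conv_nth)
    have "(vs ! a, vs ! 0) \<in> ?R\<^sup>*"
      using symD[OF sym_rtrancl[OF sym_adj_rel] from_root[OF ab(1)]] .
    also have "(vs ! 0, vs ! b) \<in> ?R\<^sup>*" using from_root[OF ab(2)] .
    finally show ?thesis using ab by simp
  qed
  with \<open>V \<noteq> {}\<close> show ?thesis by (simp add: connected_graph_def)
qed

text \<open>Rank vertices by their position in the ordering: an F-tree edge to an earlier vertex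
  always goes to the parent.\<close>
lemma ftree_acyclic:
  assumes gs: "gs_ordering V E vs"
  shows "\<not> has_cycle (ftree E vs)"
proof -
  have "\<forall>x\<in>set vs. \<exists>i. i < length vs \<and> vs ! i = x" by (simp add: in_set_conv_nth)
  then obtain pos where pos: "\<forall>x\<in>set vs. pos x < length vs \<and> vs ! pos x = x"
    by metis
  have vertices: "\<Union>(ftree E vs) \<subseteq> set vs" by (rule Union_ftree_subset[OF gs])
  show ?thesis
  proof (rule not_has_cycle_if_unique_lower_neighbour)
    show "inj_on pos (\<Union>(ftree E vs))"
      using pos vertices unfolding inj_on_def by (metis subsetD)
  next
    have to_parent: "pos y = ftree_parent_idx E vs (pos x)"
      if "{x, y} \<in> ftree E vs" "pos y < pos x" for x y
    proof -
      have "x \<in> set vs" "y \<in> set vs" using that(1) vertices by auto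
      with that pos have "{vs ! pos x, vs ! pos y} \<in> ftree E vs" "pos x < length vs" "pos y < length vs"
        by auto
      with ftree_edge_iff[OF gs] gs_ordering_parent(1)[OF gs, of "pos y"] that(2)
      show ?thesis by fastforce
    qed
    fix x y z
    assume "{x, y} \<in> ftree E vs" "{x, z} \<in> ftree E vs" "pos y < pos x" "pos z < pos x"
    then have "pos y = pos z" using to_parent[of x y] to_parent[of x z] by simp
    moreover have "y \<in> set vs" "z \<in> set vs"
      using \<open>{x, y} \<in> ftree E vs\<close> \<open>{x, z} \<in> ftree E vs\<close> vertices by auto
    ultimately show "y = z" using pos by metis
  qed
qed

lemma spanning_tree_ftree:
  assumes "gs_ordering V E vs" "V \<noteq> {}"
  shows "spanning_tree V E (ftree E vs)"
  unfolding spanning_tree_def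
  using ftree_subset[OF assms(1)] connected_ftree[OF assms] ftree_acyclic[OF assms(1)] by blast

lemma ftree_leaves_subset_rooted_tree_leaves:
  assumes gs: "gs_ordering V E vs"
  shows "ftree_leaves E vs \<subseteq> rooted_tree_leaves V (ftree E vs) (vs ! 0)"
proof
  fix x assume "x \<in> ftree_leaves E vs"
  then obtain i where i: "x = vs ! i" "0 < i" "i < length vs"
    and childless: "\<not> (\<exists>j < length vs. 0 < j \<and> ftree_parent_idx E vs j = i)"
    unfolding ftree_leaves_def by blast
  have dist: "distinct vs" and set_vs: "set vs = V" using gs by (auto simp: gs_ordering_def)
  let ?p = "ftree_parent_idx E vs i"
  have "?p < length vs" using gs_ordering_parent(1)[OF gs i(2,3)] i(3) by simp
  have "{w. {x, w} \<in> ftree E vs} = {vs ! ?p}"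
  proof (intro set_eqI iffI)
    fix w assume "w \<in> {w. {x, w} \<in> ftree E vs}"
    then have "w \<in> set vs" using Union_ftree_subset[OF gs] by blast
    then obtain j where "j < length vs" "w = vs ! j" by (metis in_set_conv_nth)
    then show "w \<in> {vs ! ?p}"
      using ftree_edge_iff[OF gs i(3)] \<open>w \<in> {w. {x, w} \<in> ftree E vs}\<close> i childless by auto
  next
    fix w assume "w \<in> {vs ! ?p}"
    then show "w \<in> {w. {x, w} \<in> ftree E vs}"
      using ftree_edge_iff[OF gs i(3) \<open>?p < length vs\<close>] i by simp
  qed
  then have "tree_degree (ftree E vs) x = 1" by (simp add: tree_degree_def)
  moreover have "x \<noteq> vs ! 0"
    using i dist nth_eq_iff_index_eq[of vs i 0] by (metis less_nat_zero_code order.strict_trans)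
  moreover have "x \<in> V" using i set_vs by auto
  ultimately show "x \<in> rooted_tree_leaves V (ftree E vs) (vs ! 0)"
    by (simp add: rooted_tree_leaves_def)
qed

text \<open>A walk can enter a vertex of L only from its unique neighbour and must return there,
  so these detours can be cut out.\<close>
lemma rtrancl_avoiding_pendants:
  assumes "sym R"
    and pendant: "\<And>v. v \<in> L \<Longrightarrow> \<exists>w. w \<notin> L \<and> R `` {v} \<subseteq> {w}"
    and walk: "(u, y) \<in> R\<^sup>*" and "u \<notin> L" "y \<notin> L"
  shows "(u, y) \<in> (R \<inter> (-L) \<times> (-L))\<^sup>*"
proof -
  let ?R' = "R \<inter> (-L) \<times> (-L)"
  have "(y \<notin> L \<longrightarrow> (u, y) \<in> ?R'\<^sup>*) \<and> (y \<in> L \<longrightarrow> (\<exists>w. (y, w) \<in> R \<and> w \<notin> L \<and> (u, w) \<in> ?R'\<^sup>*))"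
    using walk
  proof (induction rule: rtrancl_induct)
    case base
    then show ?case using \<open>u \<notin> L\<close> by simp
  next
    case (step y x)
    show ?case
    proof (cases "y \<in> L")
      case False
      then have "(u, y) \<in> ?R'\<^sup>*" using step.IH by simp
      moreover have "(x, y) \<in> R" using \<open>sym R\<close> step.hyps(2) by (rule symD)
      ultimately show ?thesis using False step.hyps(2) by (auto intro: rtrancl_into_rtrancl)
    next
      case True
      then obtain w where "(y, w) \<in> R" "w \<notin> L" "(u, w) \<in> ?R'\<^sup>*" using step.IH by blast
      moreover have "x = w" using pendant[OF True] step.hyps(2) \<open>(y, w) \<in> R\<close> by blast
      ultimately show ?thesis by simp
    qed
  qed
  with \<open>y \<notin> L\<close> show ?thesis by simp
qed

lemma rooted_tree_leaf_neighbour: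
  assumes conn: "connected_graph V T" and "r \<in> V" and v: "v \<in> rooted_tree_leaves V T r"
  obtains w where "adj_rel T `` {v} = {w}" "w \<notin> rooted_tree_leaves V T r"
proof -
  let ?L = "rooted_tree_leaves V T r"
  have unique: "\<exists>w. adj_rel T `` {x} = {w}" if "x \<in> ?L" for x
    using that by (auto simp: rooted_tree_leaves_def tree_degree_def Image_adj_rel card_1_singleton_iff)
  obtain w where w: "adj_rel T `` {v} = {w}" using unique[OF v] by blast
  moreover have "w \<notin> ?L"
  proof
    assume "w \<in> ?L"
    then obtain w' where "adj_rel T `` {w} = {w'}" using unique by blast
    moreover have "v \<in> adj_rel T `` {w}" using w by (auto simp: Image_adj_rel insert_commute)
    ultimately have w_only: "adj_rel T `` {w} = {v}" by simp
    have "(v, r) \<in> (adj_rel T)\<^sup>*"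
      using conn \<open>r \<in> V\<close> v unfolding connected_graph_def rooted_tree_leaves_def by blast
    then have "r \<in> {v, w}"
      by (induction rule: rtrancl_induct) (use w w_only in auto)
    with v \<open>w \<in> ?L\<close> show False by (auto simp: rooted_tree_leaves_def)
  qed
  ultimately show ?thesis using that by blast
qed

lemma connected_dominating_set_non_leaves:
  assumes sg: "simple_graph V E" and "T \<subseteq> E" and conn: "connected_graph V T" and "r \<in> V"
  shows "connected_dominating_set V E (V - rooted_tree_leaves V T r)"
proof -
  let ?L = "rooted_tree_leaves V T r"
  let ?D = "V - ?L"
  have pendant: "\<exists>w. w \<notin> ?L \<and> adj_rel T `` {v} \<subseteq> {w}" if v: "v \<in> ?L" for v
  proof -
    obtain w where "adj_rel T `` {v} = {w}" "w \<notin> ?L"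
      by (rule rooted_tree_leaf_neighbour[OF conn \<open>r \<in> V\<close> v])
    then show ?thesis by blast
  qed
  have "(u, x) \<in> (adj_rel {e \<in> E. e \<subseteq> ?D})\<^sup>*" if "u \<in> ?D" "x \<in> ?D" for u x
  proof -
    have "(u, x) \<in> (adj_rel T)\<^sup>*" using conn that unfolding connected_graph_def by blast
    moreover have "u \<notin> ?L" "x \<notin> ?L" using that by auto
    ultimately have "(u, x) \<in> (adj_rel T \<inter> (-?L) \<times> (-?L))\<^sup>*"
      using rtrancl_avoiding_pendants[OF sym_adj_rel pendant \<open>(u, x) \<in> (adj_rel T)\<^sup>*\<close>] by blast
    moreover have "adj_rel T \<inter> (-?L) \<times> (-?L) \<subseteq> adj_rel {e \<in> E. e \<subseteq> ?D}"
    proof clarify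
      fix a b assume "(a, b) \<in> adj_rel T" "a \<notin> ?L" "b \<notin> ?L"
      then have "{a, b} \<in> E" using \<open>T \<subseteq> E\<close> by (auto simp: adj_rel_def)
      with simple_graph_edgeD[OF sg this] \<open>a \<notin> ?L\<close> \<open>b \<notin> ?L\<close>
      show "(a, b) \<in> adj_rel {e \<in> E. e \<subseteq> ?D}" by (simp add: adj_rel_def)
    qed
    ultimately show ?thesis by (meson rtrancl_mono subsetD)
  qed
  moreover have "r \<in> ?D" using \<open>r \<in> V\<close> by (simp add: rooted_tree_leaves_def)
  moreover have "\<exists>d \<in> ?D. {v, d} \<in> E" if "v \<in> V - ?D" for v
  proof -
    have "v \<in> ?L" using that by blast
    then obtain w where "adj_rel T `` {v} = {w}" "w \<notin> ?L"
      by (rule rooted_tree_leaf_neighbour[OF conn \<open>r \<in> V\<close>])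
    then have "{v, w} \<in> E" using \<open>T \<subseteq> E\<close> by (auto simp: Image_adj_rel)
    with simple_graph_edgeD(2)[OF sg this] \<open>w \<notin> ?L\<close> show ?thesis by blast
  qed
  ultimately show ?thesis unfolding connected_dominating_set_def connected_graph_def by auto
qed

lemma gs_ordering_snoc:
  assumes gs: "gs_ordering S F ds" and "a \<in> S" "b \<notin> S" "{a, b} \<in> F"
  shows "gs_ordering (insert b S) F (ds @ [b])"
  unfolding gs_ordering_def
proof (intro conjI allI impI)
  show "distinct (ds @ [b])" "set (ds @ [b]) = insert b S"
    using gs \<open>b \<notin> S\<close> by (auto simp: gs_ordering_def)
  fix i assume i: "i < length (ds @ [b])" "0 < i"
  show "\<exists>j < i. {(ds @ [b]) ! j, (ds @ [b]) ! i} \<in> F"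
  proof (cases "i < length ds")
    case True
    then obtain j where "j < i" "{ds ! j, ds ! i} \<in> F" using gs i(2) by (auto simp: gs_ordering_def)
    with True show ?thesis by (intro exI[of _ j]) (simp add: nth_append)
  next
    case False
    then have "i = length ds" using i(1) by simp
    obtain j where "j < length ds" "ds ! j = a"
      using gs \<open>a \<in> S\<close> by (auto simp: gs_ordering_def in_set_conv_nth)
    with \<open>i = length ds\<close> \<open>{a, b} \<in> F\<close> show ?thesis by (intro exI[of _ j]) (simp add: nth_append)
  qed
qed

lemma rtrancl_exits_set:
  assumes "(x, y) \<in> R\<^sup>*" "x \<in> S" "y \<notin> S"
  obtains a b where "a \<in> S" "b \<notin> S" "(a, b) \<in> R"
proof -
  have "\<exists>a b. a \<in> S \<and> b \<notin> S \<and> (a, b) \<in> R"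
    using assms by (induction rule: rtrancl_induct) blast+
  with that show ?thesis by blast
qed

lemma gs_ordering_extend:
  assumes gs: "gs_ordering S F ds" and "S \<subset> D" "S \<noteq> {}"
    and conn: "connected_graph D F" and edges: "\<And>e. e \<in> F \<Longrightarrow> e \<subseteq> D"
  obtains b where "b \<in> D - S" "gs_ordering (insert b S) F (ds @ [b])"
proof -
  obtain x y where "x \<in> S" "y \<in> D - S" using \<open>S \<subset> D\<close> \<open>S \<noteq> {}\<close> by blast
  then have "(x, y) \<in> (adj_rel F)\<^sup>*"
    using conn \<open>S \<subset> D\<close> unfolding connected_graph_def by blast
  then obtain a b where ab: "a \<in> S" "b \<notin> S" "{a, b} \<in> F"
    using \<open>x \<in> S\<close> \<open>y \<in> D - S\<close> unfolding adj_rel_def by (auto elim: rtrancl_exits_set)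
  moreover have "b \<in> D" using edges[OF ab(3)] by blast
  ultimately show ?thesis using that gs_ordering_snoc[OF gs ab] by blast
qed

lemma gs_ordering_exists:
  assumes "finite D" and conn: "connected_graph D F" and edges: "\<And>e. e \<in> F \<Longrightarrow> e \<subseteq> D"
  shows "\<exists>ds. gs_ordering D F ds"
proof -
  have "\<exists>ds. gs_ordering (set ds) F ds \<and> set ds \<subseteq> D \<and> length ds = m"
    if "0 < m" "m \<le> card D" for m
    using that
  proof (induction m)
    case (Suc m)
    show ?case
    proof (cases "m = 0")
      case True
      obtain x where "x \<in> D" using conn by (auto simp: connected_graph_def)
      with True show ?thesis by (intro exI[of _ "[x]"]) (simp add: gs_ordering_def)
    next
      case False
      with Suc obtain ds where ds: "gs_ordering (set ds) F ds" "set ds \<subseteq> D" "length ds = m"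
        by auto
      then have "card (set ds) < card D"
        using Suc.prems distinct_card by (fastforce simp: gs_ordering_def)
      with ds(2) have "set ds \<subset> D" by auto
      moreover have "set ds \<noteq> {}" using False ds(3) by auto
      ultimately obtain b where "b \<in> D - set ds" "gs_ordering (insert b (set ds)) F (ds @ [b])"
        by (rule gs_ordering_extend[OF ds(1) _ _ conn edges])
      with ds show ?thesis by (intro exI[of _ "ds @ [b]"]) simp
    qed
  qed simp
  moreover have "0 < card D" using conn \<open>finite D\<close> by (auto simp: connected_graph_def card_gt_0_iff)
  ultimately obtain ds where ds: "gs_ordering (set ds) F ds" "set ds \<subseteq> D" "length ds = card D"
    by blast
  then have "set ds = D"
    using \<open>finite D\<close> distinct_card by (metis card_subset_eq gs_ordering_def)
  with ds(1) show ?thesis by auto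
qed

lemma ftree_leaves_beyond_prefix:
  assumes "0 < m"
    and early: "\<And>j. 0 < j \<Longrightarrow> j < length vs \<Longrightarrow> \<exists>l < m. {vs ! l, vs ! j} \<in> E"
  shows "set (drop m vs) \<subseteq> ftree_leaves E vs"
proof
  have parent_before: "ftree_parent_idx E vs j < m" if j: "0 < j" "j < length vs" for j
  proof -
    obtain l where "l < m" "{vs ! l, vs ! j} \<in> E" using early[OF j] by blast
    moreover have "ftree_parent_idx E vs j \<le> l"
      unfolding ftree_parent_idx_def by (rule Least_le) (fact \<open>{vs ! l, vs ! j} \<in> E\<close>)
    ultimately show ?thesis by simp
  qed
  fix v assume "v \<in> set (drop m vs)"
  then obtain q where "q < length vs - m" "vs ! (m + q) = v" by (auto simp: in_set_conv_nth)
  then have "m + q < length vs" "vs ! (m + q) = v" by simp_all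
  moreover have "\<not> (\<exists>j < length vs. 0 < j \<and> ftree_parent_idx E vs j = m + q)"
    using parent_before by (metis not_add_less1)
  moreover have "0 < m + q" using \<open>0 < m\<close> by simp
  ultimately show "v \<in> ftree_leaves E vs" unfolding ftree_leaves_def by blast
qed

text \<open>Listing D first gives every later vertex a neighbour, hence its parent, inside D.\<close>
lemma gs_ordering_append_dominated:
  assumes gs: "gs_ordering D F ds" and "F \<subseteq> E" "D \<subseteq> V" "D \<noteq> {}"
    and rs: "distinct rs" "set rs = V - D"
    and dom: "\<forall>v \<in> V - D. \<exists>d \<in> D. {v, d} \<in> E"
  shows "gs_ordering V E (ds @ rs)" "V - D \<subseteq> ftree_leaves E (ds @ rs)"
proof -
  let ?vs = "ds @ rs"
  have set_ds: "set ds = D" and "distinct ds" using gs by (auto simp: gs_ordering_def)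
  have early_neighbour: "\<exists>l < length ds. l < j \<and> {?vs ! l, ?vs ! j} \<in> E"
    if "0 < j" "j < length ?vs" for j
  proof (cases "j < length ds")
    case True
    then obtain l where "l < j" "{ds ! l, ds ! j} \<in> F"
      using gs \<open>0 < j\<close> by (auto simp: gs_ordering_def)
    with True \<open>F \<subseteq> E\<close> show ?thesis by (intro exI[of _ l]) (auto simp: nth_append)
  next
    case False
    then have "?vs ! j = rs ! (j - length ds)" "j - length ds < length rs"
      using that(2) by (auto simp: nth_append)
    then have "?vs ! j \<in> V - D" using rs(2) nth_mem by metis
    then obtain d where "d \<in> D" "{?vs ! j, d} \<in> E" using dom by blast
    then obtain l where "l < length ds" "ds ! l = d" using set_ds by (auto simp: in_set_conv_nth)
    with False \<open>{?vs ! j, d} \<in> E\<close> show ?thesis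
      by (intro exI[of _ l]) (simp add: nth_append insert_commute)
  qed
  show "gs_ordering V E ?vs"
    unfolding gs_ordering_def
  proof (intro conjI allI impI)
    show "distinct ?vs" "set ?vs = V" using \<open>distinct ds\<close> set_ds rs \<open>D \<subseteq> V\<close> by auto
    show "\<exists>l < j. {?vs ! l, ?vs ! j} \<in> E" if "j < length ?vs" "0 < j" for j
      using early_neighbour[OF that(2,1)] by blast
  qed
  have "0 < length ds" using set_ds \<open>D \<noteq> {}\<close> by auto
  then have "set (drop (length ds) ?vs) \<subseteq> ftree_leaves E ?vs"
    by (rule ftree_leaves_beyond_prefix) (use early_neighbour in blast)
  then show "V - D \<subseteq> ftree_leaves E ?vs" using rs(2) by simp
qed

lemma spanning_tree_from_gs_ordering:
  assumes gs: "gs_ordering V E vs" and "V \<noteq> {}"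
  shows "\<exists>T r. spanning_tree V E T \<and> r \<in> V \<and>
    card (ftree_leaves E vs) \<le> card (rooted_tree_leaves V T r)"
proof (intro exI conjI)
  have "set vs = V" using gs by (simp add: gs_ordering_def)
  with \<open>V \<noteq> {}\<close> show "vs ! 0 \<in> V" by (metis length_greater_0_conv nth_mem set_empty)
  show "spanning_tree V E (ftree E vs)" by (rule spanning_tree_ftree[OF assms])
  have "finite V" using \<open>set vs = V\<close> by (metis List.finite_set)
  then have "finite (rooted_tree_leaves V (ftree E vs) (vs ! 0))"
    by (simp add: rooted_tree_leaves_def)
  with ftree_leaves_subset_rooted_tree_leaves[OF gs]
  show "card (ftree_leaves E vs) \<le> card (rooted_tree_leaves V (ftree E vs) (vs ! 0))"
    by (rule card_mono[rotated])
qed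

lemma cds_from_spanning_tree:
  assumes "simple_graph V E" "spanning_tree V E T" "r \<in> V"
  shows "\<exists>D. connected_dominating_set V E D \<and> card D + card (rooted_tree_leaves V T r) = card V"
proof (intro exI conjI)
  let ?L = "rooted_tree_leaves V T r"
  show "connected_dominating_set V E (V - ?L)"
    using connected_dominating_set_non_leaves assms by (auto simp: spanning_tree_def)
  have "finite V" using assms(1) by (simp add: simple_graph_def)
  moreover have "?L \<subseteq> V" by (auto simp: rooted_tree_leaves_def)
  ultimately show "card (V - ?L) + card ?L = card V"
    by (metis card_Diff_subset card_mono finite_subset le_add_diff_inverse2)
qed

lemma gs_ordering_from_cds:
  assumes "simple_graph V E" and cds: "connected_dominating_set V E D"
  shows "\<exists>vs. gs_ordering V E vs \<and> card V \<le> card D + card (ftree_leaves E vs)"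
proof -
  have "finite V" using assms(1) by (simp add: simple_graph_def)
  have "D \<subseteq> V" and conn: "connected_graph D {e \<in> E. e \<subseteq> D}"
    and dom: "\<forall>v \<in> V - D. \<exists>d \<in> D. {v, d} \<in> E"
    using cds by (auto simp: connected_dominating_set_def)
  then have "finite D" "D \<noteq> {}"
    using \<open>finite V\<close> finite_subset by (auto simp: connected_graph_def)
  obtain ds where ds: "gs_ordering D {e \<in> E. e \<subseteq> D} ds"
    using gs_ordering_exists[OF \<open>finite D\<close> conn] by blast
  obtain rs where rs: "distinct rs" "set rs = V - D"
    using finite_distinct_list[of "V - D"] \<open>finite V\<close> by blast
  have "gs_ordering V E (ds @ rs)" "V - D \<subseteq> ftree_leaves E (ds @ rs)"
    using gs_ordering_append_dominated[OF ds _ \<open>D \<subseteq> V\<close> \<open>D \<noteq> {}\<close> rs dom] by auto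
  moreover have "finite (ftree_leaves E (ds @ rs))"
    by (simp add: ftree_leaves_def)
  ultimately have "card (V - D) \<le> card (ftree_leaves E (ds @ rs))"
    by (simp add: card_mono)
  moreover have "card V = card D + card (V - D)"
    using \<open>D \<subseteq> V\<close> \<open>finite V\<close> by (metis card_Diff_subset card_mono finite_subset le_add_diff_inverse)
  ultimately show ?thesis using \<open>gs_ordering V E (ds @ rs)\<close> by auto
qed

theorem corollary3p6:
  fixes V :: "'a set" and E :: "'a set set" and k :: int
  assumes "simple_graph V E" and "connected_graph V E"
  shows "((\<exists>vs. gs_ordering V E vs \<and> int (card (ftree_leaves E vs)) \<ge> k) \<longleftrightarrow>
          (\<exists>T r. spanning_tree V E T \<and> r \<in> V \<and> int (card (rooted_tree_leaves V T r)) \<ge> k)) \<and>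
         ((\<exists>T r. spanning_tree V E T \<and> r \<in> V \<and> int (card (rooted_tree_leaves V T r)) \<ge> k) \<longleftrightarrow>
          (\<exists>D. connected_dominating_set V E D \<and> int (card D) \<le> int (card V) - k))"
proof -
  have "V \<noteq> {}" using assms(2) by (simp add: connected_graph_def)
  have gs_st: "\<exists>T r. spanning_tree V E T \<and> r \<in> V \<and> int (card (rooted_tree_leaves V T r)) \<ge> k"
    if "gs_ordering V E vs" "int (card (ftree_leaves E vs)) \<ge> k" for vs
    using spanning_tree_from_gs_ordering[OF that(1) \<open>V \<noteq> {}\<close>] that(2) by force
  have st_cds: "\<exists>D. connected_dominating_set V E D \<and> int (card D) \<le> int (card V) - k"
    if "spanning_tree V E T" "r \<in> V" "int (card (rooted_tree_leaves V T r)) \<ge> k" for T r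
    using cds_from_spanning_tree[OF assms(1) that(1,2)] that(3) by force
  have cds_gs: "\<exists>vs. gs_ordering V E vs \<and> int (card (ftree_leaves E vs)) \<ge> k"
    if "connected_dominating_set V E D" "int (card D) \<le> int (card V) - k" for D
    using gs_ordering_from_cds[OF assms(1) that(1)] that(2) by force
  show ?thesis using gs_st st_cds cds_gs by blast
qed

end
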